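(* Let $X$ be a real Banach space with a basis $(e_k)_{k=1}^N$, where $1\le N\le\infty$, with biorthogonal functionals $(e_k^* )$. Suppose $1\le m_1<m_2<\dots<m_n<N$ and that for every $x\in[e_j]_{j=1}^{m_1}$ the sequence $\{x,e_{m_1+1},e_{m_1+2},\dots\}$ is skipped $\lambda$-unconditional. Let $x^*,y^*\in X^*\setminus\{0\}$ satisfy $x^*\in[e_k^*]_{k=1}^{m_1}$ and $y^*(e_j)=0$ for $1\le j\le m_n$. Then $\{x^*,e^*_{m_2},\dots,e^*_{m_{n-1}},y^*\}$ is a dual skipped $\lambda$-unconditional basis of its linear span. In particular this conclusion holds whenever $(e_k)_{k=1}^N$ itself is skipped $\lambda$-unconditional.
   Context: A basic sequence $(e_k)_{k=1}^N$ ($1\le N\le\infty$) is skipped $\lambda$-unconditional if whenever $0=m_0<m_1<\dots<m_n<\infty$ with $m_j-m_{j-1}\ge2$ for $1\le j\le n$, and $y_j\in[e_i]_{i=m_{j-1}+1}^{m_j-1}$ (spans taken only over indices $i\le N$), then $\|\sum_{j=1}^n\epsilon_jy_j\|\le\lambda\|\sum_{j=1}^ny_j\|$ for all signs $\epsilon_j=\pm1$. A basis $(f_k)_{k=1}^M$ of a finite-dimensional space $F$ is dual skipped $\lambda$-unconditional if its dual (biorthogonal) basis $(f_k^* )_{k=1}^M$ in $F^*$ is skipped $\lambda$-unconditional. $[\,\cdot\,]$ denotes closed linear span. *)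

theory Defs
  imports "HOL-Analysis.Analysis" "HOL-Library.Extended_Nat"
begin

text \<open>Sequences are indexed from 1; the length L (or N) is an extended natural
  (\<infinity> allowed).  Index i belongs to the sequence iff 1 \<le> i and enat i \<le> L.\<close>

definition has_expansion :: "enat \<Rightarrow> (nat \<Rightarrow> 'a::real_normed_vector) \<Rightarrow> (nat \<Rightarrow> real) \<Rightarrow> 'a \<Rightarrow> bool" where
  "has_expansion N e a x \<longleftrightarrow>
     (\<lambda>n. \<Sum>k\<in>{k. 1 \<le> k \<and> k \<le> n \<and> enat k \<le> N}. a k *\<^sub>R e k) \<longlonglongrightarrow> x"

definition schauder_basis :: "enat \<Rightarrow> (nat \<Rightarrow> 'a::real_normed_vector) \<Rightarrow> bool" where
  "schauder_basis N e \<longleftrightarrow> 1 \<le> N \<and>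
     (\<forall>x. \<exists>a. has_expansion N e a x) \<and>
     (\<forall>x a b. has_expansion N e a x \<and> has_expansion N e b x \<longrightarrow>
        (\<forall>k. 1 \<le> k \<and> enat k \<le> N \<longrightarrow> a k = b k))"

definition skipped_unconditional :: "real \<Rightarrow> (nat \<Rightarrow> 'a::real_normed_vector) \<Rightarrow> enat \<Rightarrow> bool" where
  "skipped_unconditional lam f L \<longleftrightarrow>
     (\<forall>(n::nat) (p::nat \<Rightarrow> nat) (y::nat \<Rightarrow> 'a) (eps::nat \<Rightarrow> real).
        p 0 = 0 \<and> (\<forall>j\<in>{1..n}. p (j - 1) + 2 \<le> p j) \<and>
        (\<forall>j\<in>{1..n}. y j \<in> span (f ` {i. p (j - 1) < i \<and> i < p j \<and> enat i \<le> L})) \<and>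
        (\<forall>j\<in>{1..n}. eps j = 1 \<or> eps j = -1)
        \<longrightarrow> norm (\<Sum>j=1..n. eps j *\<^sub>R y j) \<le> lam * norm (\<Sum>j=1..n. y j))"

text \<open>Dual (biorthogonal) functionals of a finite basis fs of F = span (set fs), 1-indexed:
  f_k^*(g) is the k-th coordinate of g with respect to fs.\<close>
definition dual_functional :: "'a::real_vector list \<Rightarrow> nat \<Rightarrow> 'a \<Rightarrow> real" where
  "dual_functional fs k g = real_vector.representation (set fs) g (fs ! (k - 1))"

definition dual_norm :: "'a::real_normed_vector set \<Rightarrow> ('a \<Rightarrow> real) \<Rightarrow> real" where
  "dual_norm F phi = Sup {\<bar>phi g\<bar> | g. g \<in> F \<and> norm g \<le> 1}"

text \<open>Elements of the span of {f_i^* : i in a block} are written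
  out as linear combinations with coefficients a.\<close>
definition dual_skipped_unconditional_basis :: "real \<Rightarrow> 'a::real_normed_vector list \<Rightarrow> bool" where
  "dual_skipped_unconditional_basis lam fs \<longleftrightarrow>
     distinct fs \<and> \<not> real_vector.dependent (set fs) \<and>
     (\<forall>(n::nat) (p::nat \<Rightarrow> nat) (a::nat \<Rightarrow> real) (eps::nat \<Rightarrow> real).
        p 0 = 0 \<and> (\<forall>j\<in>{1..n}. p (j - 1) + 2 \<le> p j) \<and>
        (\<forall>j\<in>{1..n}. eps j = 1 \<or> eps j = -1)
        \<longrightarrow> (let y = (\<lambda>j g. \<Sum>i\<in>{i. p (j - 1) < i \<and> i < p j \<and> i \<le> length fs}.
                              a i * dual_functional fs i g)
             in dual_norm (span (set fs)) (\<lambda>g. \<Sum>j=1..n. eps j * y j g)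
                \<le> lam * dual_norm (span (set fs)) (\<lambda>g. \<Sum>j=1..n. y j g)))"

end

theory Submission
  imports Defs
begin

text \<open>
  Each functional f i of the list has a dual vector u i (a multiple of a basis vector)
  with f i (u j) = delta i j, so signed block sums of the coordinate functionals of F are
  evaluations at vectors of X.  Comparing their dual norms reduces to: for g in F and signs sg
  changing only across a set K of skipped indices, find g' in F with norm g' <= lam * norm g
  and g' (u i) = sg i * g (u i) off K.  The functional h = sum of sg i * g (u i) * f i (i not
  in K) satisfies h z = g (T z), with T a blockwise sign change of the basis coordinates of z,
  so the hypothesis bounds it on the kernels of the f k (k in K); a finite Hahn-Banach
  correction and density of the span of the basis give g'.
\<close>

text \<open>A skipped partition of length n: 0 = p 0 and consecutive points differ by at least 2, so
  that the open blocks between them are nonempty and separated by skipped indices.\<close>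

definition skipped_partition :: "nat \<Rightarrow> (nat \<Rightarrow> nat) \<Rightarrow> bool" where
  "skipped_partition n p \<longleftrightarrow> p 0 = 0 \<and> (\<forall>j\<in>{1..n}. p (j - 1) + 2 \<le> p j)"

definition block :: "(nat \<Rightarrow> nat) \<Rightarrow> nat \<Rightarrow> nat set" where
  "block p j = {i. p (j - 1) < i \<and> i < p j}"

lemma partition_bounds_le:
  assumes "skipped_partition n p" "j \<le> j'" "j' \<le> n"
  shows "p j \<le> p j'"
  using assms(2,3)
proof (induction j' rule: dec_induct)
  case (step k)
  have "Suc k \<in> {1..n}" using step by simp
  then have "p (Suc k - 1) + 2 \<le> p (Suc k)"
    using assms(1) unfolding skipped_partition_def by blast
  then show ?case using step by simp
qed simp

lemma blocks_disjoint:
  assumes "skipped_partition n p" "j \<in> {1..n}" "j' \<in> {1..n}" "j \<noteq> j'"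
  shows "block p j \<inter> block p j' = {}"
proof -
  have "block p a \<inter> block p b = {}" if "a < b" "b \<le> n" for a b
  proof -
    have "p a \<le> p (b - 1)" using partition_bounds_le[OF assms(1), of a "b - 1"] that by simp
    then show ?thesis by (auto simp: block_def)
  qed
  then show ?thesis using assms(2-4) by (metis Int_commute atLeastAtMost_iff linorder_neqE_nat)
qed

lemma sum_over_blocks:
  fixes g :: "nat \<Rightarrow> 'b::comm_monoid_add"
  assumes "skipped_partition n p" "finite S" "S \<subseteq> (\<Union>j\<in>{1..n}. block p j)"
  shows "sum g S = (\<Sum>j=1..n. sum g (S \<inter> block p j))"
proof -
  have "S = (\<Union>j\<in>{1..n}. S \<inter> block p j)" using assms(3) by auto
  then have "sum g S = sum g (\<Union>j\<in>{1..n}. S \<inter> block p j)" by simp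
  also have "\<dots> = (\<Sum>j=1..n. sum g (S \<inter> block p j))"
  proof (rule sum.UNION_disjoint)
    show "\<forall>j\<in>{1..n}. \<forall>j'\<in>{1..n}. j \<noteq> j' \<longrightarrow> S \<inter> block p j \<inter> (S \<inter> block p j') = {}"
      using blocks_disjoint[OF assms(1)] by blast
  qed (use assms(2) in auto)
  finally show ?thesis .
qed

text \<open>A skipped partition whose blocks cover S and meet S only in runs of consecutive
  integers.  Such a partition isolates the maximal runs of S in separate blocks.\<close>

definition run_partition :: "nat set \<Rightarrow> nat \<Rightarrow> (nat \<Rightarrow> nat) \<Rightarrow> bool" where
  "run_partition S n p \<longleftrightarrow> skipped_partition n p \<and> S \<subseteq> (\<Union>j\<in>{1..n}. block p j) \<and>
     (\<forall>j\<in>{1..n}. \<forall>i\<in>S \<inter> block p j. \<forall>i'\<in>S \<inter> block p j. {i..i'} \<subseteq> S)"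

lemma run_partition_extend:
  assumes A: "finite A" "A \<noteq> {}" and run: "run_partition A n p"
    and last: "1 \<le> n" "p n = Max A + 1" and b: "b = Max A + 1"
  shows "run_partition (insert b A) n (p(n := b + 1))"
proof -
  define p' where "p' = p(n := b + 1)"
  have part: "skipped_partition n p" and cov: "A \<subseteq> (\<Union>j\<in>{1..n}. block p j)"
    and runs: "\<forall>j\<in>{1..n}. \<forall>i\<in>A \<inter> block p j. \<forall>i'\<in>A \<inter> block p j. {i..i'} \<subseteq> A"
    using run by (auto simp: run_partition_def)
  have nin: "n \<in> {1..n}" using last by simp
  have "p (n - 1) + 2 \<le> p n" using part last(1) by (auto simp: skipped_partition_def)
  then have gap: "p (n - 1) < b" using last b by simp
  have part': "skipped_partition n p'"
    using part gap last(1) by (auto simp: skipped_partition_def p'_def)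
  have old: "insert b A \<inter> block p' j = A \<inter> block p j" if "j < n" for j
    using that partition_bounds_le[OF part, of j n] last b
    by (auto simp: block_def p'_def dest: less_imp_diff_less)
  have new: "block p' n = insert b (block p n)" using gap last b by (auto simp: block_def p'_def)
  have runs_n: "{i..i'} \<subseteq> insert b A"
    if i: "i \<in> insert b A \<inter> block p' n" and i': "i' \<in> insert b A \<inter> block p' n" for i i'
  proof -
    have below_b: "a < b" if "a \<in> A" for a using Max_ge[OF A(1) that] b by simp
    consider "i = b" | "i \<noteq> b" "i' \<noteq> b" | "i \<in> A \<inter> block p n" "i' = b"
      using i new by auto
    then show ?thesis
    proof cases
      case 1
      then show ?thesis using i' below_b by fastforce
    next
      case 2
      then have "i \<in> A \<inter> block p n" "i' \<in> A \<inter> block p n" using i i' new by auto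
      then show ?thesis using runs nin by blast
    next
      case 3
      then have "Max A \<in> A \<inter> block p n" using A b last by (auto simp: block_def)
      then have "{i..Max A} \<subseteq> A" using runs nin 3 by blast
      then show ?thesis using 3 b by (auto simp: subset_iff le_Suc_eq)
    qed
  qed
  have "insert b A \<subseteq> (\<Union>j\<in>{1..n}. block p' j)"
  proof
    fix i assume "i \<in> insert b A"
    then consider "i = b" | j where "j \<in> {1..n}" "i \<in> A \<inter> block p j" using cov by blast
    then show "i \<in> (\<Union>j\<in>{1..n}. block p' j)"
    proof cases
      case (2 j)
      then have "i \<in> block p' j" using old[of j] new by (cases "j = n") auto
      then show ?thesis using 2(1) by blast
    qed (use new nin in blast)
  qed
  moreover have "{i..i'} \<subseteq> insert b A"
    if "j \<in> {1..n}" "i \<in> insert b A \<inter> block p' j" "i' \<in> insert b A \<inter> block p' j" for j i i'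
  proof (cases "j = n")
    case False
    then have "i \<in> A \<inter> block p j" "i' \<in> A \<inter> block p j" using that old[of j] by auto
    then show ?thesis using runs that(1) by blast
  qed (use runs_n that in blast)
  ultimately show ?thesis unfolding p'_def[symmetric] run_partition_def using part' by blast
qed

lemma run_partition_new_block:
  assumes A: "finite A" and run: "run_partition A n p"
    and last: "1 \<le> n" "p n = Max A + 1" and b: "Max A + 1 < b"
  shows "run_partition (insert b A) (Suc n) (p(Suc n := b + 1))"
proof -
  define p' where "p' = p(Suc n := b + 1)"
  have part: "skipped_partition n p" and cov: "A \<subseteq> (\<Union>j\<in>{1..n}. block p j)"
    and runs: "\<forall>j\<in>{1..n}. \<forall>i\<in>A \<inter> block p j. \<forall>i'\<in>A \<inter> block p j. {i..i'} \<subseteq> A"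
    using run by (auto simp: run_partition_def)
  have part': "skipped_partition (Suc n) p'"
    using part last b by (auto simp: skipped_partition_def p'_def le_Suc_eq)
  have old: "insert b A \<inter> block p' j = A \<inter> block p j" if "j \<le> n" for j
    using that partition_bounds_le[OF part that] last b by (auto simp: block_def p'_def)
  have new: "insert b A \<inter> block p' (Suc n) = {b}"
  proof -
    have "a \<notin> block p' (Suc n)" if "a \<in> A" for a
      using Max_ge[OF A that] last by (simp add: block_def p'_def)
    moreover have "b \<in> block p' (Suc n)" using last b by (simp add: block_def p'_def)
    ultimately show ?thesis by blast
  qed
  have "insert b A \<subseteq> (\<Union>j\<in>{1..Suc n}. block p' j)"
  proof
    fix i assume "i \<in> insert b A"
    then consider "i = b" | j where "j \<in> {1..n}" "i \<in> A \<inter> block p j" using cov by blast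
    then show "i \<in> (\<Union>j\<in>{1..Suc n}. block p' j)"
    proof cases
      case 1
      then have "i \<in> block p' (Suc n)" using new by blast
      then show ?thesis by auto
    next
      case (2 j)
      then have "i \<in> block p' j" using old[of j] by auto
      then show ?thesis using 2(1) by auto
    qed
  qed
  moreover have "{i..i'} \<subseteq> insert b A"
    if "j \<in> {1..Suc n}" "i \<in> insert b A \<inter> block p' j" "i' \<in> insert b A \<inter> block p' j" for j i i'
  proof (cases "j = Suc n")
    case False
    then have "j \<in> {1..n}" using that(1) by simp
    then have "i \<in> A \<inter> block p j" "i' \<in> A \<inter> block p j" using that old[of j] by auto
    then show ?thesis using runs \<open>j \<in> {1..n}\<close> by blast
  qed (use new that in auto)
  ultimately show ?thesis unfolding p'_def[symmetric] run_partition_def using part' by blast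
qed

lemma run_partition_exists:
  assumes "finite S" "0 \<notin> S"
  shows "\<exists>n p. run_partition S n p \<and> (S \<noteq> {} \<longrightarrow> 1 \<le> n \<and> p n = Max S + 1)"
  using assms
proof (induction S rule: finite_linorder_max_induct)
  case empty
  show ?case by (rule exI[of _ 0], rule exI[of _ "\<lambda>_. 0"]) (auto simp: run_partition_def skipped_partition_def)
next
  case (insert b A)
  have Mb: "Max (insert b A) = b" using insert.hyps by (simp add: Max_insert2 less_imp_le)
  show ?case
  proof (cases "A = {}")
    case True
    show ?thesis
      by (rule exI[of _ 1], rule exI[of _ "\<lambda>j. if j = 0 then 0 else b + 1"])
        (use True insert.prems in \<open>auto simp: run_partition_def skipped_partition_def block_def\<close>)
  next
    case False
    obtain n p where run: "run_partition A n p" and last: "1 \<le> n" "p n = Max A + 1"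
      using insert.IH insert.prems False by blast
    have "Max A < b" using insert.hyps False by simp
    then consider "b = Max A + 1" | "Max A + 1 < b" by linarith
    then show ?thesis
    proof cases
      case 1
      then show ?thesis using run_partition_extend[OF insert.hyps(1) False run last 1] last Mb by fastforce
    next
      case 2
      then show ?thesis using run_partition_new_block[OF insert.hyps(1) run last 2] Mb by fastforce
    qed
  qed
qed

lemma sign_constant_on_run:
  fixes s :: "nat \<Rightarrow> real"
  assumes run: "\<forall>i\<in>S \<inter> B. \<forall>i'\<in>S \<inter> B. {i..i'} \<subseteq> S"
    and changes: "\<forall>i\<in>S. \<forall>i'\<in>S. i < i' \<and> s i \<noteq> s i' \<longrightarrow> (\<exists>k. i < k \<and> k < i' \<and> k \<notin> S)"
    and i: "i \<in> S \<inter> B" "i' \<in> S \<inter> B"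
  shows "s i = s i'"
proof -
  have "s a = s a'" if a: "a \<in> S \<inter> B" "a' \<in> S \<inter> B" "a < a'" for a a'
  proof (rule ccontr)
    assume "s a \<noteq> s a'"
    then obtain k where "a < k" "k < a'" "k \<notin> S" using changes a by blast
    moreover have "{a..a'} \<subseteq> S" using run a by blast
    ultimately show False by (meson atLeastAtMost_iff less_imp_le subsetD)
  qed
  then show ?thesis using i by (cases i i' rule: linorder_cases) auto
qed

text \<open>The blocks are the runs of S.\<close>

lemma skipped_unconditional_signs:
  fixes f :: "nat \<Rightarrow> 'a::real_normed_vector" and s w :: "nat \<Rightarrow> real"
  assumes su: "skipped_unconditional lam f L"
    and S: "finite S" "0 \<notin> S" "\<forall>i\<in>S. enat i \<le> L"
    and s1: "\<forall>i\<in>S. s i = 1 \<or> s i = -1"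
    and changes: "\<forall>i\<in>S. \<forall>i'\<in>S. i < i' \<and> s i \<noteq> s i' \<longrightarrow> (\<exists>k. i < k \<and> k < i' \<and> k \<notin> S)"
  shows "norm (\<Sum>i\<in>S. (s i * w i) *\<^sub>R f i) \<le> lam * norm (\<Sum>i\<in>S. w i *\<^sub>R f i)"
proof -
  obtain n p where part: "skipped_partition n p" and cov: "S \<subseteq> (\<Union>j\<in>{1..n}. block p j)"
    and runs: "\<forall>j\<in>{1..n}. \<forall>i\<in>S \<inter> block p j. \<forall>i'\<in>S \<inter> block p j. {i..i'} \<subseteq> S"
    using run_partition_exists[OF S(1,2)] unfolding run_partition_def by (elim exE conjE)
  have const: "s i = s i'" if "j \<in> {1..n}" "i \<in> S \<inter> block p j" "i' \<in> S \<inter> block p j" for j i i'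
    using sign_constant_on_run[OF bspec[OF runs that(1)] changes that(2,3)] .
  define eps where "eps j = (if S \<inter> block p j = {} then 1 else s (SOME i. i \<in> S \<inter> block p j))" for j
  define y where "y j = (\<Sum>i\<in>S \<inter> block p j. w i *\<^sub>R f i)" for j
  have eps_s: "eps j = s i" if "j \<in> {1..n}" "i \<in> S \<inter> block p j" for j i
  proof -
    have some: "(SOME i. i \<in> S \<inter> block p j) \<in> S \<inter> block p j" using that(2) by (rule someI)
    have "eps j = s (SOME i. i \<in> S \<inter> block p j)" using that(2) by (auto simp: eps_def)
    also have "\<dots> = s i" by (rule const[OF that(1) some that(2)])
    finally show ?thesis .
  qed
  have "norm (\<Sum>j=1..n. eps j *\<^sub>R y j) \<le> lam * norm (\<Sum>j=1..n. y j)"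
  proof (rule su[unfolded skipped_unconditional_def, rule_format], intro conjI ballI)
    show "p 0 = 0" using part by (simp add: skipped_partition_def)
    show "p (j - 1) + 2 \<le> p j" if "j \<in> {1..n}" for j
      using part that by (simp add: skipped_partition_def)
    show "eps j = 1 \<or> eps j = -1" if "j \<in> {1..n}" for j
      using s1 eps_s[OF that] by (cases "S \<inter> block p j = {}") (auto simp: eps_def)
    show "y j \<in> span (f ` {i. p (j - 1) < i \<and> i < p j \<and> enat i \<le> L})" for j
      unfolding y_def by (intro span_sum span_scale span_base) (use S(3) in \<open>auto simp: block_def\<close>)
  qed
  moreover have "(\<Sum>j=1..n. y j) = (\<Sum>i\<in>S. w i *\<^sub>R f i)"
    unfolding y_def by (rule sum_over_blocks[OF part S(1) cov, symmetric])
  moreover have "(\<Sum>j=1..n. eps j *\<^sub>R y j) = (\<Sum>i\<in>S. (s i * w i) *\<^sub>R f i)"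
  proof -
    have "(\<Sum>j=1..n. eps j *\<^sub>R y j) = (\<Sum>j=1..n. \<Sum>i\<in>S \<inter> block p j. (s i * w i) *\<^sub>R f i)"
      unfolding y_def scaleR_sum_right by (intro sum.cong refl) (simp add: eps_s)
    also have "\<dots> = (\<Sum>i\<in>S. (s i * w i) *\<^sub>R f i)"
      by (rule sum_over_blocks[OF part S(1) cov, symmetric])
    finally show ?thesis .
  qed
  ultimately show ?thesis by simp
qed

lemma partition_end_not_in_block:
  assumes part: "skipped_partition n p" and "j \<in> {1..n}" "j' \<le> n"
  shows "p j' \<notin> block p j"
proof (cases "j' < j")
  case True
  then have "p j' \<le> p (j - 1)" using partition_bounds_le[OF part, of j' "j - 1"] assms(2) by simp
  then show ?thesis by (simp add: block_def)
next
  case False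
  then have "p j \<le> p j'" using partition_bounds_le[OF part, of j j'] assms(3) by simp
  then show ?thesis by (simp add: block_def)
qed

definition first_block_end :: "nat \<Rightarrow> (nat \<Rightarrow> nat) \<Rightarrow> nat \<Rightarrow> nat" where
  "first_block_end n p i = (LEAST j. 1 \<le> j \<and> j \<le> n \<and> i \<le> p j)"

lemma first_block_end:
  assumes "1 \<le> j" "j \<le> n" "i \<le> p j"
  shows "1 \<le> first_block_end n p i" "first_block_end n p i \<le> n" "i \<le> p (first_block_end n p i)"
    and "first_block_end n p i \<le> j"
  using LeastI[of "\<lambda>j. 1 \<le> j \<and> j \<le> n \<and> i \<le> p j" j] Least_le[of "\<lambda>j. 1 \<le> j \<and> j \<le> n \<and> i \<le> p j" j] assms
  by (auto simp: first_block_end_def)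

lemma first_block_end_block:
  assumes part: "skipped_partition n p" and "j \<in> {1..n}" "i \<in> block p j"
  shows "first_block_end n p i = j"
proof (rule antisym)
  show "first_block_end n p i \<le> j" using first_block_end(4) assms(2,3) by (auto simp: block_def)
  show "j \<le> first_block_end n p i"
  proof (rule ccontr)
    assume "\<not> j \<le> first_block_end n p i"
    then have "p (first_block_end n p i) \<le> p (j - 1)"
      using partition_bounds_le[OF part, of "first_block_end n p i" "j - 1"] assms(2) by simp
    then show False using first_block_end(3)[of j n i p] assms(2,3) by (auto simp: block_def)
  qed
qed

definition block_sign :: "nat \<Rightarrow> (nat \<Rightarrow> nat) \<Rightarrow> (nat \<Rightarrow> real) \<Rightarrow> nat \<Rightarrow> real" where
  "block_sign n p eps i = (if \<exists>j. 1 \<le> j \<and> j \<le> n \<and> i \<le> p j then eps (first_block_end n p i) else 1)"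

lemma block_sign_values:
  "\<forall>j\<in>{1..n}. eps j = 1 \<or> eps j = -1 \<Longrightarrow> block_sign n p eps i = 1 \<or> block_sign n p eps i = -1"
  using first_block_end(1,2) by (auto simp: block_sign_def)

lemma block_sign_on_block:
  "skipped_partition n p \<Longrightarrow> j \<in> {1..n} \<Longrightarrow> i \<in> block p j \<Longrightarrow> block_sign n p eps i = eps j"
  using first_block_end_block[of n p j i] by (auto simp: block_sign_def block_def)

lemma block_sign_change:
  assumes part: "skipped_partition n p" and change: "i < i'" "block_sign n p eps i \<noteq> block_sign n p eps i'"
  shows "\<exists>j\<in>{1..n}. i \<le> p j \<and> p j < i' \<and> 2 \<le> p j"
proof -
  define J where "J x = first_block_end n p x" for x
  have sign: "block_sign n p eps x = (if \<exists>j. 1 \<le> j \<and> j \<le> n \<and> x \<le> p j then eps (J x) else 1)" for x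
    unfolding block_sign_def J_def ..
  have covered: "\<exists>j. 1 \<le> j \<and> j \<le> n \<and> i \<le> p j"
  proof (rule ccontr)
    assume "\<not> ?thesis"
    moreover then have "\<not> (\<exists>j. 1 \<le> j \<and> j \<le> n \<and> i' \<le> p j)" using change(1) by auto
    ultimately show False using change(2) sign[of i] sign[of i'] by argo
  qed
  then obtain j where j: "1 \<le> j" "j \<le> n" "i \<le> p j" by blast
  note Ji = first_block_end(1-3)[of j n i p, OF j, folded J_def]
  have "p (J i) < i'"
  proof (rule ccontr)
    assume "\<not> p (J i) < i'"
    then have i'_le: "i' \<le> p (J i)" by simp
    note Ji' = first_block_end(1-3)[of "J i" n i' p, OF Ji(1,2) i'_le, folded J_def]
    have "J i' \<le> J i" using first_block_end(4)[of "J i" n i' p, OF Ji(1,2) i'_le] by (simp add: J_def)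
    moreover have "J i \<le> J i'"
      using first_block_end(4)[of "J i'" n i p, OF Ji'(1,2)] Ji'(3) change(1) by (simp add: J_def)
    moreover have "\<exists>j. 1 \<le> j \<and> j \<le> n \<and> i' \<le> p j" using Ji(1,2) i'_le by blast
    ultimately show False using change(2) sign[of i] sign[of i'] covered by simp
  qed
  moreover have "p (J i - 1) + 2 \<le> p (J i)" using part Ji by (auto simp: skipped_partition_def)
  ultimately show ?thesis using Ji by (intro bexI[of _ "J i"]) auto
qed

lemma block_sign_pattern:
  fixes eps :: "nat \<Rightarrow> real"
  assumes part: "skipped_partition n p" and eps: "\<forall>j\<in>{1..n}. eps j = 1 \<or> eps j = -1"
  obtains sg :: "nat \<Rightarrow> real" and K where "K \<subseteq> {2..d - 1}"
    and "\<forall>i. sg i = 1 \<or> sg i = -1"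
    and "\<forall>i\<in>{1..d}. \<forall>i'\<in>{1..d}. i < i' \<and> sg i \<noteq> sg i' \<longrightarrow> (\<exists>k\<in>K. i \<le> k \<and> k < i')"
    and "\<forall>j\<in>{1..n}. \<forall>i\<in>block p j. i \<notin> K \<and> sg i = eps j"
proof -
  define K where "K = {2..d - 1} \<inter> p ` {1..n}"
  have "\<exists>k\<in>K. i \<le> k \<and> k < i'"
    if i': "i' \<in> {1..d}" and change: "i < i'" "block_sign n p eps i \<noteq> block_sign n p eps i'" for i i'
  proof -
    obtain j where "j \<in> {1..n}" "i \<le> p j" "p j < i'" "2 \<le> p j"
      using block_sign_change[OF part change] by blast
    then show ?thesis using i' by (intro bexI[of _ "p j"]) (auto simp: K_def)
  qed
  moreover have "\<forall>j\<in>{1..n}. \<forall>i\<in>block p j. i \<notin> K \<and> block_sign n p eps i = eps j"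
    using partition_end_not_in_block[OF part] block_sign_on_block[OF part] by (auto simp: K_def)
  ultimately show ?thesis using block_sign_values[OF eps] by (intro that[of K "block_sign n p eps"]) (auto simp: K_def)
qed

context
  fixes fs :: "('a::real_normed_vector \<Rightarrow>\<^sub>L real) list" and u :: "nat \<Rightarrow> 'a"
  assumes biorth: "\<forall>i\<in>{1..length fs}. \<forall>j\<in>{1..length fs}. blinfun_apply (fs ! (i - 1)) (u j) = (if i = j then 1 else 0)"
begin

lemma biorth_distinct: "distinct fs"
proof (subst distinct_conv_nth, intro allI impI)
  fix i j assume "i < length fs" "j < length fs" "i \<noteq> j"
  then show "fs ! i \<noteq> fs ! j"
    using biorth[rule_format, of "Suc i" "Suc i"] biorth[rule_format, of "Suc j" "Suc i"] by auto
qed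

lemma biorth_set: "set fs = (\<lambda>i. fs ! (i - 1)) ` {1..length fs}"
proof (rule set_eqI)
  fix b
  show "b \<in> set fs \<longleftrightarrow> b \<in> (\<lambda>i. fs ! (i - 1)) ` {1..length fs}"
  proof
    assume "b \<in> set fs"
    then obtain k where "k < length fs" "b = fs ! k" by (auto simp: in_set_conv_nth)
    then show "b \<in> (\<lambda>i. fs ! (i - 1)) ` {1..length fs}" by (intro image_eqI[of _ _ "Suc k"]) auto
  qed auto
qed

lemma biorth_inj: "inj_on (\<lambda>i. fs ! (i - 1)) {1..length fs}"
  using biorth_distinct by (auto simp: inj_on_def nth_eq_iff_index_eq)

lemma biorth_apply_combination:
  assumes "i \<in> {1..length fs}"
  shows "blinfun_apply (\<Sum>b\<in>set fs. c b *\<^sub>R b) (u i) = c (fs ! (i - 1))"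
proof -
  have "blinfun_apply (\<Sum>b\<in>set fs. c b *\<^sub>R b) (u i) = (\<Sum>b\<in>set fs. c b * blinfun_apply b (u i))"
    by (simp add: blinfun.sum_left blinfun.scaleR_left)
  also have "\<dots> = (\<Sum>k=1..length fs. c (fs ! (k - 1)) * blinfun_apply (fs ! (k - 1)) (u i))"
    unfolding biorth_set by (rule sum.reindex[OF biorth_inj, unfolded comp_def])
  also have "\<dots> = (\<Sum>k=1..length fs. if k = i then c (fs ! (i - 1)) else 0)"
  proof (rule sum.cong[OF refl])
    fix k assume "k \<in> {1..length fs}"
    then show "c (fs ! (k - 1)) * blinfun_apply (fs ! (k - 1)) (u i) = (if k = i then c (fs ! (i - 1)) else 0)"
      using biorth assms by simp
  qed
  finally show ?thesis using assms by simp
qed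

lemma biorth_independent: "\<not> dependent (set fs)"
proof (rule independent_if_scalars_zero)
  fix c b assume sum0: "(\<Sum>b\<in>set fs. c b *\<^sub>R b) = 0" and "b \<in> set fs"
  then obtain i where "i \<in> {1..length fs}" "b = fs ! (i - 1)" unfolding biorth_set by blast
  then show "c b = 0" using biorth_apply_combination[of i c] sum0 by simp
qed simp

lemma biorth_dual_functional:
  assumes "g \<in> span (set fs)" "i \<in> {1..length fs}"
  shows "dual_functional fs i g = blinfun_apply g (u i)"
proof -
  have "(\<Sum>b\<in>set fs. representation (set fs) g b *\<^sub>R b) = g"
    by (rule sum_representation_eq[OF biorth_independent assms(1)]) auto
  then have "blinfun_apply g (u i) = representation (set fs) g (fs ! (i - 1))"
    using biorth_apply_combination[OF assms(2), of "representation (set fs) g"] by simp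
  then show ?thesis by (simp add: dual_functional_def)
qed

lemma biorth_expansion:
  assumes "g \<in> span (set fs)"
  shows "g = (\<Sum>i=1..length fs. blinfun_apply g (u i) *\<^sub>R fs ! (i - 1))"
proof -
  have "g = (\<Sum>b\<in>set fs. representation (set fs) g b *\<^sub>R b)"
    by (rule sum_representation_eq[OF biorth_independent assms, symmetric]) auto
  also have "\<dots> = (\<Sum>i=1..length fs. representation (set fs) g (fs ! (i - 1)) *\<^sub>R fs ! (i - 1))"
    unfolding biorth_set by (rule sum.reindex[OF biorth_inj, unfolded comp_def])
  also have "\<dots> = (\<Sum>i=1..length fs. blinfun_apply g (u i) *\<^sub>R fs ! (i - 1))"
    using biorth_dual_functional[OF assms] by (intro sum.cong) (simp_all add: dual_functional_def)
  finally show ?thesis .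
qed

end

lemma hahn_banach_step:
  fixes h :: "'a::real_normed_vector \<Rightarrow>\<^sub>L real"
  assumes U: "subspace U" and C: "0 \<le> C"
    and bound: "\<And>u. u \<in> U \<Longrightarrow> \<bar>h u\<bar> \<le> C * norm u"
  shows "\<exists>D. \<forall>u\<in>U. \<forall>t. \<bar>h u + t * D\<bar> \<le> C * norm (u + t *\<^sub>R w0)"
proof -
  define D where "D = Sup {- C * norm (u + w0) - h u | u. u \<in> U}"
  have pair: "- C * norm (u + w0) - h u \<le> C * norm (u' + w0) - h u'" if "u \<in> U" "u' \<in> U" for u u'
  proof -
    have "h u' - h u = h (u' - u)" by (simp add: blinfun.diff_right)
    also have "\<dots> \<le> C * norm (u' - u)" using bound[of "u' - u"] that U by (simp add: subspace_diff)
    also have "\<dots> \<le> C * (norm (u' + w0) + norm (u + w0))"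
      using norm_triangle_ineq4[of "u' + w0" "u + w0"] C by (intro mult_left_mono) simp_all
    finally show ?thesis by (simp add: algebra_simps)
  qed
  have D_lower: "- C * norm (u + w0) - h u \<le> D" if "u \<in> U" for u
    unfolding D_def using pair[OF _ that] that U
    by (intro cSup_upper) (auto simp: bdd_above_def intro: subspace_0)
  have D_upper: "D \<le> C * norm (u + w0) - h u" if "u \<in> U" for u
    unfolding D_def using pair[OF _ that] U by (intro cSup_least) (auto intro: subspace_0)
  have at_one: "\<bar>h u + D\<bar> \<le> C * norm (u + w0)" if "u \<in> U" for u
    using D_lower[OF that] D_upper[OF that] by linarith
  show ?thesis
  proof (intro exI ballI allI)
    fix u t assume u: "u \<in> U"
    show "\<bar>h u + t * D\<bar> \<le> C * norm (u + t *\<^sub>R w0)"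
    proof (cases "t = 0")
      case True
      then show ?thesis using bound[OF u] by simp
    next
      case False
      have "\<bar>h u + t * D\<bar> = \<bar>t\<bar> * \<bar>h ((1 / t) *\<^sub>R u) + D\<bar>"
        using False by (simp add: blinfun.scaleR_right abs_mult[symmetric] algebra_simps)
      also have "\<dots> \<le> \<bar>t\<bar> * (C * norm ((1 / t) *\<^sub>R u + w0))"
        using at_one[of "(1 / t) *\<^sub>R u"] U u by (simp add: subspace_scale mult_left_mono)
      also have "\<bar>t\<bar> * norm ((1 / t) *\<^sub>R u + w0) = norm (u + t *\<^sub>R w0)"
        using False by (simp add: norm_scaleR[symmetric] scaleR_add_right del: norm_scaleR)
      then have "\<bar>t\<bar> * (C * norm ((1 / t) *\<^sub>R u + w0)) = C * norm (u + t *\<^sub>R w0)"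
        by (metis mult.left_commute)
      finally show ?thesis .
    qed
  qed
qed

lemma hahn_banach_finite_correction:
  fixes h :: "'a::real_normed_vector \<Rightarrow>\<^sub>L real" and l :: "nat \<Rightarrow> 'a \<Rightarrow>\<^sub>L real" and w :: "nat \<Rightarrow> 'a"
  assumes V: "subspace V" and C: "0 \<le> C" and K: "finite K"
    and w: "\<forall>k\<in>K. w k \<in> V"
    and lw: "\<forall>k\<in>K. \<forall>k'\<in>K. l k (w k') = (if k = k' then 1 else 0)"
    and bound: "\<forall>v\<in>V. (\<forall>k\<in>K. l k v = 0) \<longrightarrow> \<bar>h v\<bar> \<le> C * norm v"
  shows "\<exists>c. \<forall>v\<in>V. \<bar>h v + (\<Sum>k\<in>K. c k * l k v)\<bar> \<le> C * norm v"
  using K w lw bound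
proof (induction K arbitrary: h rule: finite_induct)
  case (insert k0 K)
  define U where "U = {u \<in> V. \<forall>k\<in>insert k0 K. l k u = 0}"
  have U: "subspace U"
    using V by (auto simp: U_def subspace_def blinfun.add_right blinfun.scaleR_right)
  obtain D where D: "\<forall>u\<in>U. \<forall>t. \<bar>h u + t * D\<bar> \<le> C * norm (u + t *\<^sub>R w k0)"
    using hahn_banach_step[OF U C, of h "w k0"] insert.prems(3) by (auto simp: U_def)
  define c0 where "c0 = D - h (w k0)"
  define h1 where "h1 = h + c0 *\<^sub>R l k0"
  have "\<bar>h1 v\<bar> \<le> C * norm v" if v: "v \<in> V" "\<forall>k\<in>K. l k v = 0" for v
  proof -
    define t where "t = l k0 v"
    define u where "u = v - t *\<^sub>R w k0"
    have "l k (w k0) = 0" if "k \<in> K" for k using insert.prems(2) insert.hyps(2) that by force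
    then have "u \<in> U"
      using v V insert.prems(1,2)
      by (auto simp: U_def u_def t_def blinfun.diff_right blinfun.scaleR_right subspace_diff subspace_scale)
    moreover have "h1 v = h u + t * D"
      using insert.prems(2)
      by (simp add: h1_def c0_def u_def t_def blinfun.diff_right blinfun.scaleR_right blinfun.add_left
          blinfun.diff_left blinfun.scaleR_left algebra_simps)
    moreover have "v = u + t *\<^sub>R w k0" by (simp add: u_def)
    ultimately show ?thesis using D by metis
  qed
  then obtain c where c: "\<forall>v\<in>V. \<bar>h1 v + (\<Sum>k\<in>K. c k * l k v)\<bar> \<le> C * norm v"
    using insert.IH[of h1] insert.prems(1,2) by auto
  have split: "(\<Sum>k\<in>insert k0 K. (c(k0 := c0)) k * l k v) = c0 * l k0 v + (\<Sum>k\<in>K. c k * l k v)" for v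
    using insert.hyps by simp (rule sum.cong, auto)
  show ?case
  proof (intro exI ballI)
    fix v assume "v \<in> V"
    then show "\<bar>h v + (\<Sum>k\<in>insert k0 K. (c(k0 := c0)) k * l k v)\<bar> \<le> C * norm v"
      using c split[of v] by (simp add: h1_def blinfun.add_left blinfun.scaleR_left add.assoc)
  qed
qed simp

lemma blinfun_bound_from_dense:
  fixes g :: "'a::real_normed_vector \<Rightarrow>\<^sub>L real"
  assumes dense: "closure V = UNIV" and C: "0 \<le> C"
    and bound: "\<And>v. v \<in> V \<Longrightarrow> \<bar>g v\<bar> \<le> C * norm v"
  shows "norm g \<le> C"
proof (rule norm_blinfun_bound[OF C])
  fix x
  have "closed {x. \<bar>g x\<bar> \<le> C * norm x}"
    by (intro closed_Collect_le continuous_intros blinfun.continuous_on)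
  then have "closure V \<subseteq> {x. \<bar>g x\<bar> \<le> C * norm x}"
    using bound by (intro closure_minimal) auto
  then show "norm (g x) \<le> C * norm x" using dense by auto
qed

corollary blinfun_zero_from_dense:
  fixes g :: "'a::real_normed_vector \<Rightarrow>\<^sub>L real"
  assumes "closure V = UNIV" "\<And>v. v \<in> V \<Longrightarrow> g v = 0"
  shows "g = 0"
  using blinfun_bound_from_dense[of V 0 g] assms by simp

lemma dual_norm_cong:
  assumes "\<And>g. g \<in> F \<Longrightarrow> Phi g = Psi g"
  shows "dual_norm F Phi = dual_norm F Psi"
  unfolding dual_norm_def using assms by metis

lemma dual_norm_evaluation_comparison:
  fixes F :: "('a::real_normed_vector \<Rightarrow>\<^sub>L real) set"
  assumes F: "subspace F" and lam: "0 < lam"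
    and transfer: "\<And>g. g \<in> F \<Longrightarrow> \<exists>g'\<in>F. norm g' \<le> lam * norm g \<and> blinfun_apply g w = blinfun_apply g' v"
  shows "dual_norm F (\<lambda>g. blinfun_apply g w) \<le> lam * dual_norm F (\<lambda>g. blinfun_apply g v)"
proof -
  have ne: "{\<bar>blinfun_apply g x\<bar> | g. g \<in> F \<and> norm g \<le> 1} \<noteq> {}" for x
    using F by (auto intro: subspace_0)
  have upper: "\<bar>blinfun_apply g v\<bar> \<le> dual_norm F (\<lambda>g. blinfun_apply g v)" if "g \<in> F" "norm g \<le> 1" for g
  proof -
    have "\<bar>blinfun_apply g v\<bar> \<le> norm v" if "norm g \<le> 1" for g :: "'a \<Rightarrow>\<^sub>L real"
      using norm_blinfun[of g v] that mult_right_mono[OF that, of "norm v"] by simp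
    then show ?thesis
      unfolding dual_norm_def using that by (intro cSup_upper) (auto simp: bdd_above_def)
  qed
  have "\<bar>blinfun_apply g w\<bar> \<le> lam * dual_norm F (\<lambda>g. blinfun_apply g v)" if g: "g \<in> F" "norm g \<le> 1" for g
  proof -
    obtain g' where g': "g' \<in> F" "norm g' \<le> lam * norm g" "blinfun_apply g w = blinfun_apply g' v" using transfer[OF g(1)] by blast
    define g'' where "g'' = (1 / lam) *\<^sub>R g'"
    have "g'' \<in> F" using F g'(1) by (simp add: g''_def subspace_scale)
    moreover have "norm g'' \<le> 1"
      using g'(2) g(2) lam by (simp add: g''_def field_simps order_trans)
    ultimately have "\<bar>blinfun_apply g'' v\<bar> \<le> dual_norm F (\<lambda>g. blinfun_apply g v)" by (rule upper)
    moreover have "\<bar>blinfun_apply g w\<bar> = lam * \<bar>blinfun_apply g'' v\<bar>"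
      using g'(3) lam by (simp add: g''_def blinfun.scaleR_left abs_mult)
    ultimately show ?thesis using lam by simp
  qed
  then show ?thesis unfolding dual_norm_def[of F "\<lambda>g. blinfun_apply g w"] by (intro cSup_least[OF ne]) auto
qed

lemma shift_preserves_sign_gaps:
  fixes tau :: "nat \<Rightarrow> real" and c :: nat
  assumes ge: "\<forall>q\<in>Q. c \<le> q"
    and gap: "\<forall>q\<in>Q. \<forall>q'\<in>Q. q < q' \<and> tau q \<noteq> tau q' \<longrightarrow> (\<exists>k. q < k \<and> k < q' \<and> k \<notin> Q)"
  shows "\<forall>i\<in>(\<lambda>q. q - c + 1) ` Q. \<forall>i'\<in>(\<lambda>q. q - c + 1) ` Q. i < i' \<and> tau (c + i - 1) \<noteq> tau (c + i' - 1)
           \<longrightarrow> (\<exists>k. i < k \<and> k < i' \<and> k \<notin> (\<lambda>q. q - c + 1) ` Q)"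
proof (intro ballI impI)
  fix i i' assume "i \<in> (\<lambda>q. q - c + 1) ` Q" "i' \<in> (\<lambda>q. q - c + 1) ` Q"
    and change: "i < i' \<and> tau (c + i - 1) \<noteq> tau (c + i' - 1)"
  then obtain q q' where q: "q \<in> Q" "i = q - c + 1" and q': "q' \<in> Q" "i' = q' - c + 1" by blast
  then have "q < q' \<and> tau q \<noteq> tau q'" using change ge by auto
  then obtain k where k: "q < k" "k < q'" "k \<notin> Q" using gap q(1) q'(1) by blast
  have "k - c + 1 \<notin> (\<lambda>q. q - c + 1) ` Q"
  proof
    assume "k - c + 1 \<in> (\<lambda>q. q - c + 1) ` Q"
    then obtain r where "r \<in> Q" "k - c + 1 = r - c + 1" by blast
    moreover have "c \<le> k" using ge q(1) k(1) by fastforce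
    ultimately have "k = r" using ge by fastforce
    then show False using \<open>r \<in> Q\<close> k(3) by simp
  qed
  moreover have "i < k - c + 1" "k - c + 1 < i'" using q q' k ge by auto
  ultimately show "\<exists>k. i < k \<and> k < i' \<and> k \<notin> (\<lambda>q. q - c + 1) ` Q" by blast
qed

locale skipped_dual_setting =
  fixes e :: "nat \<Rightarrow> 'a::banach"
    and estar :: "nat \<Rightarrow> ('a \<Rightarrow>\<^sub>L real)"
    and N :: enat and lam :: real
    and m :: "nat \<Rightarrow> nat" and n :: nat
    and xstar ystar :: "'a \<Rightarrow>\<^sub>L real"
  assumes basis: "schauder_basis N e"
    and biorth: "\<forall>j k. 1 \<le> j \<and> enat j \<le> N \<and> 1 \<le> k \<and> enat k \<le> N \<longrightarrow>
                   blinfun_apply (estar j) (e k) = (if j = k then 1 else 0)"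
    and n_pos: "1 \<le> n"
    and m1: "1 \<le> m 1"
    and m_mono: "\<forall>j\<in>{1..<n}. m j < m (Suc j)"
    and mn: "enat (m n) < N"
    and hyp: "\<forall>x\<in>span (e ` {1..m 1}).
               skipped_unconditional lam (\<lambda>i. if i = 1 then x else e (m 1 + i - 1))
                 (N - enat (m 1) + 1)"
    and xstar_nz: "xstar \<noteq> 0"
    and ystar_nz: "ystar \<noteq> 0"
    and xstar_span: "xstar \<in> span (estar ` {1..m 1})"
    and ystar_van: "\<forall>j\<in>{1..m n}. blinfun_apply ystar (e j) = 0"
begin

abbreviation in_basis :: "nat \<Rightarrow> bool" where
  "in_basis k \<equiv> 1 \<le> k \<and> enat k \<le> N"

lemma estar_e: "in_basis j \<Longrightarrow> in_basis k \<Longrightarrow> blinfun_apply (estar j) (e k) = (if j = k then 1 else 0)"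
  using biorth by blast

lemma e_inj: "inj_on e {k. in_basis k}"
  by (rule inj_onI) (metis estar_e mem_Collect_eq zero_neq_one)

text \<open>Finite linear combinations of the basis are dense: partial sums of expansions converge.\<close>

lemma span_basis_dense: "closure (span (e ` {k. in_basis k})) = UNIV"
proof -
  have "x \<in> closure (span (e ` {k. in_basis k}))" for x
  proof -
    obtain a where a: "has_expansion N e a x" using basis unfolding schauder_basis_def by blast
    define s where "s M = (\<Sum>k\<in>{k. 1 \<le> k \<and> k \<le> M \<and> enat k \<le> N}. a k *\<^sub>R e k)" for M
    have "s \<longlonglongrightarrow> x" using a unfolding has_expansion_def s_def[abs_def] .
    moreover have "s M \<in> span (e ` {k. in_basis k})" for M
      unfolding s_def by (intro span_sum span_scale span_base) auto
    ultimately show ?thesis unfolding closure_sequential by blast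
  qed
  then show ?thesis by auto
qed

lemma functional_eq_zero:
  fixes phi :: "'a \<Rightarrow>\<^sub>L real"
  assumes "\<And>k. in_basis k \<Longrightarrow> blinfun_apply phi (e k) = 0"
  shows "phi = 0"
proof -
  have "subspace {v. blinfun_apply phi v = 0}"
    by (simp add: subspace_def blinfun.add_right blinfun.scaleR_right)
  then have "span (e ` {k. in_basis k}) \<subseteq> {v. blinfun_apply phi v = 0}"
    using assms by (intro span_minimal) auto
  then show ?thesis by (intro blinfun_zero_from_dense[OF span_basis_dense]) blast
qed

lemma m_less: "1 \<le> i \<Longrightarrow> i < j \<Longrightarrow> j \<le> n \<Longrightarrow> m i < m j"
proof (induction j rule: nat_induct)
  case (Suc j)
  then have "m j < m (Suc j)" using m_mono by auto
  then show ?case using Suc by (cases "i = j") auto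
qed simp

lemma m_le: "1 \<le> i \<Longrightarrow> i \<le> j \<Longrightarrow> j \<le> n \<Longrightarrow> m i \<le> m j"
  using m_less by (cases "i = j") (auto simp: order_less_imp_le)

lemma below_mn_in_basis: "1 \<le> k \<Longrightarrow> k \<le> m n \<Longrightarrow> in_basis k"
  using mn by (metis enat_ord_simps(1) le_less_trans less_imp_le)

lemma m_in_basis: "1 \<le> j \<Longrightarrow> j \<le> n \<Longrightarrow> in_basis (m j)"
  using m_le[of 1 j] m_le[of j n] m1 below_mn_in_basis by simp

lemma xstar_vanishes: "in_basis k \<Longrightarrow> m 1 < k \<Longrightarrow> blinfun_apply xstar (e k) = 0"
proof -
  assume k: "in_basis k" "m 1 < k"
  have "subspace {phi::'a \<Rightarrow>\<^sub>L real. blinfun_apply phi (e k) = 0}"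
    by (simp add: subspace_def blinfun.add_left blinfun.scaleR_left)
  moreover have "blinfun_apply (estar j) (e k) = 0" if "j \<in> {1..m 1}" for j
    using that k estar_e[of j k] below_mn_in_basis[of j] m_le[of 1 n] n_pos by simp
  ultimately have "span (estar ` {1..m 1}) \<subseteq> {phi. blinfun_apply phi (e k) = 0}"
    by (intro span_minimal) auto
  then show ?thesis using xstar_span by blast
qed

text \<open>The constant lam is at least 1 (apply the hypothesis to the single vector e 1).\<close>

lemma lam_ge_1: "1 \<le> lam"
proof -
  have e1: "e 1 \<in> span (e ` {1..m 1})" using m1 by (intro span_base) auto
  have "enat 1 \<le> N - enat (m 1) + 1" by (cases N) (auto simp: one_enat_def)
  then have "norm (\<Sum>i\<in>{1}. (1 * 1) *\<^sub>R (\<lambda>i. if i = 1 then e 1 else e (m 1 + i - 1)) i)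
    \<le> lam * norm (\<Sum>i\<in>{1::nat}. 1 *\<^sub>R (\<lambda>i. if i = 1 then e 1 else e (m 1 + i - 1)) i)"
    by (intro skipped_unconditional_signs[OF hyp[rule_format, OF e1]]) auto
  moreover have "e 1 \<noteq> 0" using estar_e[of 1 1] below_mn_in_basis[of 1] m_le[of 1 n] m1 n_pos by auto
  ultimately show ?thesis by simp
qed

text \<open>The functionals of the theorem, f 1 = x*, f i = estar (m i) for 1 < i < d, f d = y*,
  where d = max n 2.  Their anchors m 1, m i, m n are the positions in the basis that
  delimit their supports: f 1 lives on [1, m 1], f i at m i, and f d beyond m n.\<close>

definition fs :: "('a \<Rightarrow>\<^sub>L real) list" where
  "fs = [xstar] @ map (\<lambda>j. estar (m j)) [2..<n] @ [ystar]"

definition d :: nat where "d = length fs"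

definition f :: "nat \<Rightarrow> 'a \<Rightarrow>\<^sub>L real" where "f i = fs ! (i - 1)"

definition anchor :: "nat \<Rightarrow> nat" where "anchor i = (if i = d then m n else m i)"

lemma d_eq: "d = max n 2"
  using n_pos by (auto simp: d_def fs_def)

lemma interior_index: "2 \<le> i \<Longrightarrow> i \<le> d - 1 \<Longrightarrow> i < n \<and> d = n"
  using d_eq by auto

lemma f_first: "f 1 = xstar"
  by (simp add: f_def fs_def)

lemma f_last: "f d = ystar"
proof -
  have "d - 1 = length ([xstar] @ map (\<lambda>j. estar (m j)) [2..<n])" using n_pos by (auto simp: d_def fs_def)
  then show ?thesis unfolding f_def fs_def by (metis append.assoc nth_append_length)
qed

lemma f_interior: "2 \<le> i \<Longrightarrow> i \<le> d - 1 \<Longrightarrow> f i = estar (m i)"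
proof -
  assume i: "2 \<le> i" "i \<le> d - 1"
  then have lt: "i - 2 < n - 2" using interior_index[OF i] by simp
  have "i - 1 = Suc (i - 2)" using i by simp
  then have "fs ! (i - 1) = (map (\<lambda>j. estar (m j)) [2..<n] @ [ystar]) ! (i - 2)"
    unfolding fs_def by simp
  also have "\<dots> = estar (m (2 + (i - 2)))" using lt by (simp add: nth_append)
  also have "2 + (i - 2) = i" using i by simp
  finally show ?thesis by (simp add: f_def)
qed

lemma anchor_first: "anchor 1 = m 1"
  using d_eq by (simp add: anchor_def)

lemma anchor_interior: "i \<le> d - 1 \<Longrightarrow> anchor i = m i"
  using d_eq by (simp add: anchor_def)

lemma anchor_strict: "1 \<le> i' \<Longrightarrow> i' < i \<Longrightarrow> i \<le> d - 1 \<Longrightarrow> anchor i' < anchor i"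
  using interior_index[of i] m_less[of i' i] anchor_interior by simp

lemma anchor_mono: "1 \<le> i \<Longrightarrow> i \<le> i' \<Longrightarrow> i' \<le> d \<Longrightarrow> anchor i \<le> anchor i'"
proof -
  assume i: "1 \<le> i" "i \<le> i'" "i' \<le> d"
  have "i \<le> n" if "i \<le> d - 1" for i using that d_eq n_pos by (simp add: max_def split: if_splits)
  show ?thesis
  proof (cases "i' = d")
    case True
    then show ?thesis
      using m_le[of i n] \<open>i \<le> d - 1 \<Longrightarrow> i \<le> n\<close> i anchor_interior[of i] by (cases "i = d") (auto simp: anchor_def)
  next
    case False
    then show ?thesis
      using m_le[of i i'] \<open>i' \<le> d - 1 \<Longrightarrow> i' \<le> n\<close> i anchor_interior by simp
  qed
qed

lemma anchor_interior_range: "2 \<le> i \<Longrightarrow> i \<le> d - 1 \<Longrightarrow> m 1 < anchor i \<and> anchor i < m n"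
  using interior_index[of i] m_less[of 1 i] m_less[of i n] anchor_interior by simp

text \<open>It
  is the only functional that can be nonzero at e q, so flipping signs along positions
  according to the owner commutes with the functionals f i.\<close>

definition owner :: "nat \<Rightarrow> nat" where
  "owner q = (LEAST i. 1 \<le> i \<and> (i = d \<or> q \<le> anchor i))"

lemma owner_spec: "1 \<le> owner q \<and> owner q \<le> d \<and> (owner q = d \<or> q \<le> anchor (owner q))"
proof -
  have d: "1 \<le> d \<and> (d = d \<or> q \<le> anchor d)" using d_eq by simp
  show ?thesis
    using LeastI[where P = "\<lambda>i. 1 \<le> i \<and> (i = d \<or> q \<le> anchor i)", OF d]
      Least_le[where P = "\<lambda>i. 1 \<le> i \<and> (i = d \<or> q \<le> anchor i)", OF d]
    unfolding owner_def by blast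
qed

lemma owner_below: "1 \<le> i \<Longrightarrow> i < owner q \<Longrightarrow> anchor i < q \<and> i \<noteq> d"
  using not_less_Least[of i "\<lambda>i. 1 \<le> i \<and> (i = d \<or> q \<le> anchor i)"] unfolding owner_def by auto

lemma owner_le: "1 \<le> i \<Longrightarrow> q \<le> anchor i \<Longrightarrow> owner q \<le> i"
  unfolding owner_def by (rule Least_le) simp

lemma owner_mono: "q \<le> q' \<Longrightarrow> owner q \<le> owner q'"
proof (rule ccontr)
  assume qq: "q \<le> q'" and "\<not> owner q \<le> owner q'"
  then have lt: "owner q' < owner q" by simp
  have "1 \<le> owner q'" using owner_spec by simp
  then have "anchor (owner q') < q" "owner q' \<noteq> d" using owner_below[OF _ lt] by auto
  moreover have "q' \<le> anchor (owner q')" using calculation(2) owner_spec[of q'] by simp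
  ultimately show False using qq by simp
qed

lemma owner_first: "q \<le> m 1 \<Longrightarrow> owner q = 1"
  using owner_le[of 1 q] owner_spec[of q] anchor_first by simp

lemma owner_last: "m n < q \<Longrightarrow> owner q = d"
proof (rule ccontr)
  assume "m n < q" "owner q \<noteq> d"
  then have "q \<le> anchor (owner q)" using owner_spec[of q] by simp
  also have "\<dots> \<le> anchor d" using anchor_mono owner_spec[of q] by simp
  also have "anchor d = m n" by (simp add: anchor_def)
  finally show False using \<open>m n < q\<close> by simp
qed

lemma owner_interior: "2 \<le> i \<Longrightarrow> i \<le> d - 1 \<Longrightarrow> owner (anchor i) = i"
proof (rule ccontr)
  assume i: "2 \<le> i" "i \<le> d - 1" and ne: "owner (anchor i) \<noteq> i"
  then have lt: "owner (anchor i) < i" using owner_le[of i "anchor i"] by simp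
  then have "owner (anchor i) \<noteq> d" using i by simp
  then have "anchor i \<le> anchor (owner (anchor i))" using owner_spec[of "anchor i"] by simp
  moreover have "anchor (owner (anchor i)) < anchor i" using anchor_strict[OF _ lt i(2)] owner_spec by simp
  ultimately show False by simp
qed

lemma f_interior_e:
  assumes i: "2 \<le> i" "i \<le> d - 1" and q: "in_basis q"
  shows "blinfun_apply (f i) (e q) = (if q = anchor i then 1 else 0)"
proof -
  have "i < n" using interior_index i by simp
  then show ?thesis using estar_e[of "m i" q] m_in_basis[of i] f_interior anchor_interior i q by auto
qed

lemma f_interior_support:
  assumes "2 \<le> i" "i \<le> d - 1" "in_basis q" "blinfun_apply (f i) (e q) \<noteq> 0"
  shows "q = anchor i"
  using f_interior_e[OF assms(1-3)] assms(4) by (simp split: if_splits)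

lemma f_support:
  assumes i: "i \<in> {1..d}" and q: "in_basis q" and nz: "blinfun_apply (f i) (e q) \<noteq> 0"
  shows "owner q = i"
proof -
  consider "i = 1" | "i = d" | "2 \<le> i" "i \<le> d - 1" using i d_eq by fastforce
  then show ?thesis
  proof cases
    case 1
    then have "\<not> m 1 < q" using nz xstar_vanishes[OF q] f_first by auto
    then show ?thesis using owner_first 1 by simp
  next
    case 2
    then have "\<not> q \<le> m n" using nz ystar_van q f_last by auto
    then show ?thesis using owner_last 2 by simp
  next
    case 3
    then show ?thesis using owner_interior f_interior_support[OF 3 q nz] by simp
  qed
qed

definition xstar_pos :: nat where
  "xstar_pos = (SOME j. in_basis j \<and> blinfun_apply xstar (e j) \<noteq> 0)"

definition ystar_pos :: nat where
  "ystar_pos = (SOME j. in_basis j \<and> blinfun_apply ystar (e j) \<noteq> 0)"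

lemma xstar_pos: "in_basis xstar_pos \<and> blinfun_apply xstar (e xstar_pos) \<noteq> 0"
proof -
  have "\<exists>j. in_basis j \<and> blinfun_apply xstar (e j) \<noteq> 0"
  proof (rule ccontr)
    assume "\<nexists>j. in_basis j \<and> blinfun_apply xstar (e j) \<noteq> 0"
    then have "xstar = 0" by (intro functional_eq_zero) auto
    then show False using xstar_nz by simp
  qed
  then show ?thesis unfolding xstar_pos_def by (rule someI_ex)
qed

lemma ystar_pos: "in_basis ystar_pos \<and> blinfun_apply ystar (e ystar_pos) \<noteq> 0"
proof -
  have "\<exists>j. in_basis j \<and> blinfun_apply ystar (e j) \<noteq> 0"
  proof (rule ccontr)
    assume "\<nexists>j. in_basis j \<and> blinfun_apply ystar (e j) \<noteq> 0"
    then have "ystar = 0" by (intro functional_eq_zero) auto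
    then show False using ystar_nz by simp
  qed
  then show ?thesis unfolding ystar_pos_def by (rule someI_ex)
qed

definition dual_pos :: "nat \<Rightarrow> nat" where
  "dual_pos i = (if i = 1 then xstar_pos else if i = d then ystar_pos else anchor i)"

lemma dual_pos: "i \<in> {1..d} \<Longrightarrow> in_basis (dual_pos i) \<and> blinfun_apply (f i) (e (dual_pos i)) \<noteq> 0"
proof -
  assume i: "i \<in> {1..d}"
  consider "i = 1" | "i = d" | "2 \<le> i" "i \<le> d - 1" using i d_eq by fastforce
  then show ?thesis
  proof cases
    case 1
    then have "f i = xstar" "dual_pos i = xstar_pos" using f_first by (simp_all add: dual_pos_def)
    then show ?thesis using xstar_pos by simp
  next
    case 2
    moreover have "d \<noteq> 1" using d_eq by simp
    ultimately have "f i = ystar" "dual_pos i = ystar_pos" using f_last by (simp_all add: dual_pos_def)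
    then show ?thesis using ystar_pos by simp
  next
    case 3
    then have "i < n" "i \<noteq> 1" "i \<noteq> d" using interior_index by auto
    then have "dual_pos i = m i" "f i = estar (m i)" "in_basis (m i)"
      using 3 f_interior anchor_interior m_in_basis[of i] by (simp_all add: dual_pos_def)
    then show ?thesis using estar_e[of "m i" "m i"] by simp
  qed
qed

definition u :: "nat \<Rightarrow> 'a" where
  "u i = (1 / blinfun_apply (f i) (e (dual_pos i))) *\<^sub>R e (dual_pos i)"

lemma f_u: "i \<in> {1..d} \<Longrightarrow> j \<in> {1..d} \<Longrightarrow> blinfun_apply (f i) (u j) = (if i = j then 1 else 0)"
proof -
  assume i: "i \<in> {1..d}" and j: "j \<in> {1..d}"
  have zero: "blinfun_apply (f i) (e (dual_pos j)) = 0" if "i \<noteq> j"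
  proof (rule ccontr)
    assume "blinfun_apply (f i) (e (dual_pos j)) \<noteq> 0"
    then have "owner (dual_pos j) = i" using f_support[OF i] dual_pos[OF j] by blast
    moreover have "owner (dual_pos j) = j" using f_support[OF j] dual_pos[OF j] by blast
    ultimately show False using that by simp
  qed
  show ?thesis
  proof (cases "i = j")
    case True
    then show ?thesis using dual_pos[OF j] by (simp add: u_def blinfun.scaleR_right)
  next
    case False
    then show ?thesis using zero by (simp add: u_def blinfun.scaleR_right)
  qed
qed

lemma u_span:
  assumes "i \<in> {1..d}"
  shows "u i \<in> span (e ` {k. in_basis k})"
  using dual_pos[OF assms] unfolding u_def by (intro span_scale span_base imageI) simp

lemma fs_biorth:
  "\<forall>i\<in>{1..length fs}. \<forall>j\<in>{1..length fs}. blinfun_apply (fs ! (i - 1)) (u j) = (if i = j then 1 else 0)"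
  using f_u unfolding f_def d_def by simp

lemma fs_dual_functional:
  "g \<in> span (set fs) \<Longrightarrow> i \<in> {1..d} \<Longrightarrow> dual_functional fs i g = blinfun_apply g (u i)"
  using biorth_dual_functional[OF fs_biorth] by (simp add: d_def)

lemma fs_expansion: "g \<in> span (set fs) \<Longrightarrow> g = (\<Sum>i=1..d. blinfun_apply g (u i) *\<^sub>R f i)"
  using biorth_expansion[OF fs_biorth] by (simp add: d_def f_def)

lemma f_in_fs: "i \<in> {1..d} \<Longrightarrow> f i \<in> set fs"
  by (auto simp: f_def d_def)

lemma combination_at_u:
  assumes "A \<subseteq> {1..d}" "i \<in> {1..d}"
  shows "blinfun_apply (\<Sum>k\<in>A. c k *\<^sub>R f k) (u i) = (if i \<in> A then c i else 0)"
proof -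
  have "blinfun_apply (\<Sum>k\<in>A. c k *\<^sub>R f k) (u i) = (\<Sum>k\<in>A. if k = i then c k else 0)"
    using f_u assms by (auto simp: blinfun.sum_left blinfun.scaleR_left intro!: sum.cong)
  then show ?thesis using assms(1) finite_subset[OF assms(1)] by simp
qed

lemma combination_in_span: "A \<subseteq> {1..d} \<Longrightarrow> (\<Sum>k\<in>A. c k *\<^sub>R f k) \<in> span (set fs)"
  using f_in_fs by (intro span_sum span_scale span_base) auto

text \<open>The hypothesis in the original indices: for x0 in the span of e 1, ..., e (m 1) and a finite
  set Q of later positions, the signs of x0 and of the terms in Q may be changed at cost lam
  if they change only across positions missing from insert (m 1) Q.\<close>

lemma hyp_shifted:
  fixes Q :: "nat set" and W tau :: "nat \<Rightarrow> real"
  assumes x0: "x0 \<in> span (e ` {1..m 1})"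
    and Q: "finite Q" "\<forall>q\<in>Q. in_basis q \<and> m 1 < q"
    and tau: "\<forall>q\<in>insert (m 1) Q. tau q = 1 \<or> tau q = -1"
    and gap: "\<forall>q\<in>insert (m 1) Q. \<forall>q'\<in>insert (m 1) Q. q < q' \<and> tau q \<noteq> tau q'
               \<longrightarrow> (\<exists>k. q < k \<and> k < q' \<and> k \<notin> insert (m 1) Q)"
  shows "norm (tau (m 1) *\<^sub>R x0 + (\<Sum>q\<in>Q. (tau q * W q) *\<^sub>R e q)) \<le> lam * norm (x0 + (\<Sum>q\<in>Q. W q *\<^sub>R e q))"
proof -
  define Q' where "Q' = insert (m 1) Q"
  define ph where "ph q = q - m 1 + 1" for q
  define g where "g i = (if i = 1 then x0 else e (m 1 + i - 1))" for i
  define w where "w q = (if q = m 1 then 1 else W q)" for q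
  have Q'_ge: "m 1 \<le> q" if "q \<in> Q'" for q using that Q by (auto simp: Q'_def)
  have ph_inv: "m 1 + ph q - 1 = q" if "q \<in> Q'" for q using Q'_ge[OF that] by (simp add: ph_def)
  have inj: "inj_on ph Q'" using ph_inv by (metis inj_onI)
  have reindex: "(\<Sum>i\<in>ph ` Q'. G i) = (\<Sum>q\<in>Q'. G (ph q))" for G :: "nat \<Rightarrow> 'a"
    by (simp add: sum.reindex[OF inj])
  have m1_notin: "m 1 \<notin> Q" using Q by auto
  let ?s = "\<lambda>i. tau (m 1 + i - 1)" and ?w = "\<lambda>i. w (m 1 + i - 1)"
  have "norm (\<Sum>i\<in>ph ` Q'. (?s i * ?w i) *\<^sub>R g i) \<le> lam * norm (\<Sum>i\<in>ph ` Q'. ?w i *\<^sub>R g i)"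
  proof (rule skipped_unconditional_signs[OF hyp[rule_format, OF x0, folded g_def]])
    show "finite (ph ` Q')" using Q by (simp add: Q'_def)
    show "0 \<notin> ph ` Q'" by (auto simp: ph_def)
    show "\<forall>i\<in>ph ` Q'. enat i \<le> N - enat (m 1) + 1"
      using Q by (cases N) (auto simp: Q'_def ph_def one_enat_def)
    show "\<forall>i\<in>ph ` Q'. ?s i = 1 \<or> ?s i = -1" using tau ph_inv by (auto simp: Q'_def)
    show "\<forall>i\<in>ph ` Q'. \<forall>i'\<in>ph ` Q'. i < i' \<and> ?s i \<noteq> ?s i' \<longrightarrow> (\<exists>k. i < k \<and> k < i' \<and> k \<notin> ph ` Q')"
      unfolding ph_def[abs_def] by (rule shift_preserves_sign_gaps) (use Q'_ge gap in \<open>auto simp: Q'_def\<close>)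
  qed
  moreover have sums: "(\<Sum>i\<in>ph ` Q'. (c i * ?w i) *\<^sub>R g i) = (c (ph (m 1)) * 1) *\<^sub>R x0 + (\<Sum>q\<in>Q. (c (ph q) * W q) *\<^sub>R e q)"
    for c :: "nat \<Rightarrow> real"
  proof -
    have "g (ph q) = e q" "w q = W q" if "q \<in> Q" for q
      using that ph_inv[of q] m1_notin by (auto simp: g_def w_def ph_def Q'_def)
    then show ?thesis
      unfolding reindex using ph_inv m1_notin Q(1) by (simp add: Q'_def g_def w_def ph_def)
  qed
  ultimately show ?thesis using sums[of "\<lambda>_. 1"] ph_inv by (simp add: Q'_def)
qed

lemma owner_sign_change:
  fixes sg :: "nat \<Rightarrow> real"
  assumes K: "K \<subseteq> {2..d - 1}"
    and run: "\<forall>i\<in>{1..d}. \<forall>i'\<in>{1..d}. i < i' \<and> sg i \<noteq> sg i' \<longrightarrow> (\<exists>k\<in>K. i \<le> k \<and> k < i')"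
    and qq: "q \<le> q'" "sg (owner q) \<noteq> sg (owner q')"
  shows "\<exists>k\<in>K. q \<le> anchor k \<and> anchor k < q'"
proof -
  have "owner q < owner q'" using owner_mono[OF qq(1)] qq(2) by (cases "owner q = owner q'") auto
  then obtain k where k: "k \<in> K" "owner q \<le> k" "k < owner q'"
    using run owner_spec[of q] owner_spec[of q'] qq(2) by force
  then have k_range: "2 \<le> k" "k \<le> d - 1" using K by auto
  have "anchor k < q'" using owner_below[of k q'] k k_range by simp
  moreover have "q \<le> anchor (owner q)" using owner_spec[of q] k k_range by auto
  moreover have "anchor (owner q) \<le> anchor k" using anchor_mono owner_spec[of q] k k_range by simp
  ultimately have "q \<le> anchor k \<and> anchor k < q'" by linarith
  then show ?thesis using k(1) by blast
qed

lemma owner_sign_flip_bound: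
  fixes Q :: "nat set" and W sg :: "nat \<Rightarrow> real"
  assumes Q: "finite Q" "\<forall>q\<in>Q. in_basis q"
    and sg: "\<forall>i. sg i = 1 \<or> sg i = -1"
    and K: "K \<subseteq> {2..d - 1}" "\<forall>k\<in>K. anchor k \<notin> Q"
    and run: "\<forall>i\<in>{1..d}. \<forall>i'\<in>{1..d}. i < i' \<and> sg i \<noteq> sg i' \<longrightarrow> (\<exists>k\<in>K. i \<le> k \<and> k < i')"
  shows "norm (\<Sum>q\<in>Q. (sg (owner q) * W q) *\<^sub>R e q) \<le> lam * norm (\<Sum>q\<in>Q. W q *\<^sub>R e q)"
proof -
  define Q1 where "Q1 = {q\<in>Q. q \<le> m 1}"
  define Q2 where "Q2 = {q\<in>Q. m 1 < q}"
  define x0 where "x0 = (\<Sum>q\<in>Q1. W q *\<^sub>R e q)"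
  have split: "(\<Sum>q\<in>Q. G q) = (\<Sum>q\<in>Q1. G q) + (\<Sum>q\<in>Q2. G q)" for G :: "nat \<Rightarrow> 'a"
    unfolding Q1_def Q2_def using Q(1) by (subst sum.union_disjoint[symmetric]) (auto intro: sum.cong)
  have head: "sg (owner (m 1)) *\<^sub>R x0 = (\<Sum>q\<in>Q1. (sg (owner q) * W q) *\<^sub>R e q)"
    unfolding x0_def scaleR_sum_right by (intro sum.cong) (auto simp: Q1_def owner_first)
  have "norm (sg (owner (m 1)) *\<^sub>R x0 + (\<Sum>q\<in>Q2. (sg (owner q) * W q) *\<^sub>R e q))
        \<le> lam * norm (x0 + (\<Sum>q\<in>Q2. W q *\<^sub>R e q))"
  proof (rule hyp_shifted)
    show "x0 \<in> span (e ` {1..m 1})"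
      unfolding x0_def by (intro span_sum span_scale span_base) (use Q(2) in \<open>auto simp: Q1_def\<close>)
    show "finite Q2" "\<forall>q\<in>Q2. in_basis q \<and> m 1 < q" using Q by (auto simp: Q2_def)
    show "\<forall>q\<in>insert (m 1) Q2. sg (owner q) = 1 \<or> sg (owner q) = -1" using sg by blast
    show "\<forall>q\<in>insert (m 1) Q2. \<forall>q'\<in>insert (m 1) Q2. q < q' \<and> sg (owner q) \<noteq> sg (owner q')
            \<longrightarrow> (\<exists>k. q < k \<and> k < q' \<and> k \<notin> insert (m 1) Q2)"
    proof (intro ballI impI)
      fix q q' assume q: "q \<in> insert (m 1) Q2" and "q' \<in> insert (m 1) Q2"
        and change: "q < q' \<and> sg (owner q) \<noteq> sg (owner q')"
      then obtain k where k: "k \<in> K" "q \<le> anchor k" "anchor k < q'"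
        using owner_sign_change[OF K(1) run, of q q'] by auto
      moreover have "anchor k \<notin> Q" "m 1 < anchor k" using K k(1) anchor_interior_range by auto
      ultimately have "q \<noteq> anchor k" using q by (auto simp: Q2_def)
      then have "q < anchor k" using k(2) by simp
      then show "\<exists>k. q < k \<and> k < q' \<and> k \<notin> insert (m 1) Q2"
        using k \<open>anchor k \<notin> Q\<close> \<open>m 1 < anchor k\<close> by (auto simp: Q2_def)
    qed
  qed
  then show ?thesis unfolding split[of "\<lambda>q. W q *\<^sub>R e q"] split[of "\<lambda>q. (sg (owner q) * W q) *\<^sub>R e q"]
    head[symmetric] x0_def .
qed

lemma span_basis_expansion:
  assumes "z \<in> span (e ` {k. in_basis k})"
  obtains Q W where "finite Q" "\<forall>q\<in>Q. in_basis q" "\<forall>q\<in>Q. W q \<noteq> 0" "z = (\<Sum>q\<in>Q. W q *\<^sub>R e q)"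
proof -
  obtain t r where t: "finite t" "t \<subseteq> e ` {k. in_basis k}" "z = (\<Sum>a\<in>t. r a *\<^sub>R a)"
    using assms unfolding span_explicit by blast
  obtain T where T: "T \<subseteq> {k. in_basis k}" "finite T" "t = e ` T"
    using finite_subset_image[OF t(1,2)] by blast
  have inj: "inj_on e T" using e_inj T(1) inj_on_subset by blast
  define W where "W q = r (e q)" for q
  define Q where "Q = {q\<in>T. W q \<noteq> 0}"
  have "z = (\<Sum>q\<in>T. W q *\<^sub>R e q)"
    using t(3) T(3) sum.reindex[OF inj, of "\<lambda>a. r a *\<^sub>R a"] by (simp add: W_def)
  also have "\<dots> = (\<Sum>q\<in>Q. W q *\<^sub>R e q)"
    by (rule sum.mono_neutral_right) (auto simp: Q_def T(2))
  finally have "z = (\<Sum>q\<in>Q. W q *\<^sub>R e q)" .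
  then show ?thesis using T by (intro that) (auto simp: Q_def)
qed

lemma flip_commutes:
  fixes Q :: "nat set" and W sg :: "nat \<Rightarrow> real"
  assumes Q: "\<forall>q\<in>Q. in_basis q" and i: "i \<in> {1..d}"
  shows "blinfun_apply (f i) (\<Sum>q\<in>Q. (sg (owner q) * W q) *\<^sub>R e q) = sg i * blinfun_apply (f i) (\<Sum>q\<in>Q. W q *\<^sub>R e q)"
proof -
  have summand: "sg (owner q) * W q * blinfun_apply (f i) (e q) = sg i * (W q * blinfun_apply (f i) (e q))"
    if "q \<in> Q" for q
    using f_support[OF i] Q that by (cases "blinfun_apply (f i) (e q) = 0") auto
  have "blinfun_apply (f i) (\<Sum>q\<in>Q. (sg (owner q) * W q) *\<^sub>R e q)
      = (\<Sum>q\<in>Q. sg (owner q) * W q * blinfun_apply (f i) (e q))"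
    by (simp add: blinfun.sum_right blinfun.scaleR_right)
  also have "\<dots> = (\<Sum>q\<in>Q. sg i * (W q * blinfun_apply (f i) (e q)))"
    by (rule sum.cong) (simp_all add: summand)
  also have "\<dots> = sg i * blinfun_apply (f i) (\<Sum>q\<in>Q. W q *\<^sub>R e q)"
    by (simp add: blinfun.sum_right blinfun.scaleR_right sum_distrib_left)
  finally show ?thesis .
qed

text \<open>Key estimate: h = (sum over i not in K of sg i g(u i) f i) satisfies
  |h z| <= lam * norm g * norm z for finitely supported z killed by all f k, k in K,
  because h z = g (T z) for the sign flip T of z, and the anchors of K are gaps of z.\<close>

lemma flipped_functional_bound:
  fixes g :: "'a \<Rightarrow>\<^sub>L real" and sg :: "nat \<Rightarrow> real"
  assumes g: "g \<in> span (set fs)" and sg: "\<forall>i. sg i = 1 \<or> sg i = -1"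
    and K: "K \<subseteq> {2..d - 1}"
    and run: "\<forall>i\<in>{1..d}. \<forall>i'\<in>{1..d}. i < i' \<and> sg i \<noteq> sg i' \<longrightarrow> (\<exists>k\<in>K. i \<le> k \<and> k < i')"
    and z: "z \<in> span (e ` {k. in_basis k})" and zK: "\<forall>k\<in>K. blinfun_apply (f k) z = 0"
  shows "\<bar>blinfun_apply (\<Sum>i\<in>{1..d} - K. (sg i * blinfun_apply g (u i)) *\<^sub>R f i) z\<bar> \<le> lam * norm g * norm z"
proof -
  obtain Q W where Q: "finite Q" "\<forall>q\<in>Q. in_basis q" "\<forall>q\<in>Q. W q \<noteq> 0"
    and z_eq: "z = (\<Sum>q\<in>Q. W q *\<^sub>R e q)"
    using span_basis_expansion[OF z] by blast
  define Tz where "Tz = (\<Sum>q\<in>Q. (sg (owner q) * W q) *\<^sub>R e q)"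
  define c where "c i = blinfun_apply g (u i)" for i
  have gaps: "\<forall>k\<in>K. anchor k \<notin> Q"
  proof (intro ballI notI)
    fix k assume k: "k \<in> K" and in_Q: "anchor k \<in> Q"
    have k_range: "2 \<le> k" "k \<le> d - 1" using K k by auto
    have "blinfun_apply (f k) z = (\<Sum>q\<in>Q. W q * blinfun_apply (f k) (e q))"
      unfolding z_eq by (simp add: blinfun.sum_right blinfun.scaleR_right)
    also have "\<dots> = (\<Sum>q\<in>Q. if q = anchor k then W q else 0)"
      using f_interior_e[OF k_range] Q(2) by (intro sum.cong) auto
    also have "\<dots> = W (anchor k)" using in_Q Q(1) by simp
    finally show False using zK k Q(3) in_Q by simp
  qed
  have "norm Tz \<le> lam * norm z"
    unfolding Tz_def z_eq by (rule owner_sign_flip_bound[OF Q(1,2) sg K gaps run])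
  moreover have "blinfun_apply (\<Sum>i\<in>{1..d} - K. (sg i * c i) *\<^sub>R f i) z = blinfun_apply g Tz"
  proof -
    have "blinfun_apply g Tz = (\<Sum>i=1..d. c i * blinfun_apply (f i) Tz)"
      by (subst fs_expansion[OF g, folded c_def]) (simp add: blinfun.sum_left blinfun.scaleR_left)
    also have "\<dots> = (\<Sum>i\<in>{1..d}. sg i * c i * blinfun_apply (f i) z)"
      unfolding Tz_def z_eq using flip_commutes[OF Q(2)] by (intro sum.cong) simp_all
    also have "\<dots> = (\<Sum>i\<in>{1..d} - K. sg i * c i * blinfun_apply (f i) z)"
      using zK K by (intro sum.mono_neutral_right) auto
    finally show ?thesis by (simp add: blinfun.sum_left blinfun.scaleR_left)
  qed
  moreover have "\<bar>blinfun_apply g Tz\<bar> \<le> norm g * norm Tz" using norm_blinfun[of g Tz] by simp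
  ultimately show ?thesis
    using mult_left_mono[of "norm Tz" "lam * norm z" "norm g"] by (simp add: c_def mult.assoc mult.left_commute)
qed

text \<open>Correcting h by multiples of the f k (k in K) via Hahn-Banach, and extending the bound by
  density, gives g' in the span with norm g' <= lam * norm g and the flipped coordinates.\<close>

lemma sign_change_in_span:
  fixes g :: "'a \<Rightarrow>\<^sub>L real" and sg :: "nat \<Rightarrow> real"
  assumes g: "g \<in> span (set fs)" and sg: "\<forall>i. sg i = 1 \<or> sg i = -1"
    and K: "K \<subseteq> {2..d - 1}"
    and run: "\<forall>i\<in>{1..d}. \<forall>i'\<in>{1..d}. i < i' \<and> sg i \<noteq> sg i' \<longrightarrow> (\<exists>k\<in>K. i \<le> k \<and> k < i')"
  obtains g' where "g' \<in> span (set fs)" "norm g' \<le> lam * norm g"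
    "\<forall>i\<in>{1..d} - K. blinfun_apply g' (u i) = sg i * blinfun_apply g (u i)"
proof -
  define h where "h = (\<Sum>i\<in>{1..d} - K. (sg i * blinfun_apply g (u i)) *\<^sub>R f i)"
  define V where "V = span (e ` {k. in_basis k})"
  define C where "C = lam * norm g"
  have C: "0 \<le> C" using lam_ge_1 by (simp add: C_def)
  have "{2..d - 1} \<subseteq> {1..d}" by auto
  then have KI: "K \<subseteq> {1..d}" using K by blast
  have "\<exists>c. \<forall>v\<in>V. \<bar>blinfun_apply h v + (\<Sum>k\<in>K. c k * blinfun_apply (f k) v)\<bar> \<le> C * norm v"
  proof (rule hahn_banach_finite_correction[where w = u])
    show "subspace V" "finite K" using K by (auto simp: V_def intro: finite_subset)
    show "\<forall>k\<in>K. u k \<in> V" using u_span KI by (auto simp: V_def)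
    show "\<forall>k\<in>K. \<forall>k'\<in>K. blinfun_apply (f k) (u k') = (if k = k' then 1 else 0)"
      using f_u KI by (meson subsetD)
    show "\<forall>v\<in>V. (\<forall>k\<in>K. blinfun_apply (f k) v = 0) \<longrightarrow> \<bar>blinfun_apply h v\<bar> \<le> C * norm v"
      using flipped_functional_bound[OF g sg K run] by (simp add: h_def V_def C_def)
  qed (rule C)
  then obtain c where c: "\<forall>v\<in>V. \<bar>blinfun_apply h v + (\<Sum>k\<in>K. c k * blinfun_apply (f k) v)\<bar> \<le> C * norm v"
    by blast
  define g' where "g' = h + (\<Sum>k\<in>K. c k *\<^sub>R f k)"
  have g'_apply: "blinfun_apply g' v = blinfun_apply h v + (\<Sum>k\<in>K. c k * blinfun_apply (f k) v)" for v
    by (simp add: g'_def blinfun.add_left blinfun.sum_left blinfun.scaleR_left)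
  show ?thesis
  proof (rule that)
    show "g' \<in> span (set fs)"
      unfolding g'_def h_def using combination_in_span KI by (intro span_add) auto
    show "norm g' \<le> lam * norm g"
      unfolding C_def[symmetric]
      by (rule blinfun_bound_from_dense[OF span_basis_dense C]) (use c g'_apply in \<open>simp add: V_def\<close>)
    show "\<forall>i\<in>{1..d} - K. blinfun_apply g' (u i) = sg i * blinfun_apply g (u i)"
      using combination_at_u[of "{1..d} - K"] combination_at_u[OF KI]
      by (auto simp: g'_def h_def blinfun.add_left)
  qed
qed

lemma dual_block_sign_change:
  fixes eps :: "nat \<Rightarrow> real"
  assumes part: "skipped_partition n' p" and eps: "\<forall>j\<in>{1..n'}. eps j = 1 \<or> eps j = -1"
    and g: "g \<in> span (set fs)"
  obtains g' where "g' \<in> span (set fs)" "norm g' \<le> lam * norm g"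
    "\<forall>j\<in>{1..n'}. \<forall>i\<in>block p j \<inter> {1..d}. blinfun_apply g' (u i) = eps j * blinfun_apply g (u i)"
proof -
  obtain sg :: "nat \<Rightarrow> real" and K where K: "K \<subseteq> {2..d - 1}" and sg: "\<forall>i. sg i = 1 \<or> sg i = -1"
    and run: "\<forall>i\<in>{1..d}. \<forall>i'\<in>{1..d}. i < i' \<and> sg i \<noteq> sg i' \<longrightarrow> (\<exists>k\<in>K. i \<le> k \<and> k < i')"
    and blocks: "\<forall>j\<in>{1..n'}. \<forall>i\<in>block p j. i \<notin> K \<and> sg i = eps j"
    by (rule block_sign_pattern[OF part eps])
  obtain g' where g': "g' \<in> span (set fs)" "norm g' \<le> lam * norm g"
    and signs: "\<forall>i\<in>{1..d} - K. blinfun_apply g' (u i) = sg i * blinfun_apply g (u i)"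
    by (rule sign_change_in_span[OF g sg K run])
  have "\<forall>j\<in>{1..n'}. \<forall>i\<in>block p j \<inter> {1..d}. blinfun_apply g' (u i) = eps j * blinfun_apply g (u i)"
    using signs blocks by auto
  then show ?thesis by (rule that[OF g'])
qed

text \<open>The conclusion of Lemma 5.1 inside the locale: a signed block sum of coordinate functionals
  is an evaluation at a vector v, and its dual norm is compared with the unsigned one.\<close>

lemma fs_dual_skipped_unconditional: "dual_skipped_unconditional_basis lam fs"
  unfolding dual_skipped_unconditional_basis_def
proof (intro conjI allI impI)
  show "distinct fs" by (rule biorth_distinct[OF fs_biorth])
  show "\<not> dependent (set fs)" by (rule biorth_independent[OF fs_biorth])
  fix n' :: nat and p :: "nat \<Rightarrow> nat" and a eps :: "nat \<Rightarrow> real"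
  assume "p 0 = 0 \<and> (\<forall>j\<in>{1..n'}. p (j - 1) + 2 \<le> p j) \<and> (\<forall>j\<in>{1..n'}. eps j = 1 \<or> eps j = - 1)"
  then have part: "skipped_partition n' p" and eps: "\<forall>j\<in>{1..n'}. eps j = 1 \<or> eps j = - 1"
    by (auto simp: skipped_partition_def)
  define F where "F = span (set fs)"
  define Bl where "Bl j = {i. p (j - 1) < i \<and> i < p j \<and> i \<le> length fs}" for j
  define v where "v c = (\<Sum>j=1..n'. \<Sum>i\<in>Bl j. (c j * a i) *\<^sub>R u i)" for c :: "nat \<Rightarrow> real"
  have Bl: "Bl j = block p j \<inter> {1..d}" for j by (auto simp: Bl_def block_def d_def)
  have eval: "(\<Sum>j=1..n'. c j * (\<Sum>i\<in>Bl j. a i * dual_functional fs i g)) = blinfun_apply g (v c)"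
    if "g \<in> F" for g c
  proof -
    have "(\<Sum>i\<in>Bl j. a i * dual_functional fs i g) = (\<Sum>i\<in>Bl j. a i * blinfun_apply g (u i))" for j
      using fs_dual_functional[OF that[unfolded F_def]] Bl by (intro sum.cong) auto
    then show ?thesis
      by (simp add: v_def blinfun.sum_right blinfun.scaleR_right sum_distrib_left mult.assoc)
  qed
  have "dual_norm F (\<lambda>g. blinfun_apply g (v eps)) \<le> lam * dual_norm F (\<lambda>g. blinfun_apply g (v (\<lambda>_. 1)))"
  proof (rule dual_norm_evaluation_comparison)
    show "subspace F" "0 < lam" using lam_ge_1 by (auto simp: F_def)
    fix g assume "g \<in> F"
    then obtain g' where "g' \<in> F" "norm g' \<le> lam * norm g"
      and "\<forall>j\<in>{1..n'}. \<forall>i\<in>Bl j. blinfun_apply g' (u i) = eps j * blinfun_apply g (u i)"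
      using dual_block_sign_change[OF part eps] unfolding F_def Bl by blast
    moreover from this(3) have "blinfun_apply g (v eps) = blinfun_apply g' (v (\<lambda>_. 1))"
      by (simp add: v_def blinfun.sum_right blinfun.scaleR_right mult.assoc mult.left_commute)
    ultimately show "\<exists>g'\<in>F. norm g' \<le> lam * norm g \<and> blinfun_apply g (v eps) = blinfun_apply g' (v (\<lambda>_. 1))"
      by blast
  qed
  then show "let y = (\<lambda>j g. \<Sum>i\<in>{i. p (j - 1) < i \<and> i < p j \<and> i \<le> length fs}. a i * dual_functional fs i g)
       in dual_norm (span (set fs)) (\<lambda>g. \<Sum>j=1..n'. eps j * y j g)
          \<le> lam * dual_norm (span (set fs)) (\<lambda>g. \<Sum>j=1..n'. y j g)"
    using dual_norm_cong[of F, OF eval[of _ eps]] dual_norm_cong[of F, OF eval[of _ "\<lambda>_. 1"]]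
    by (simp add: Let_def F_def Bl_def)
qed

end

theorem lemma5p1:
  fixes e :: "nat \<Rightarrow> 'a::banach"
    and estar :: "nat \<Rightarrow> ('a \<Rightarrow>\<^sub>L real)"
    and N :: enat and lam :: real
    and m :: "nat \<Rightarrow> nat" and n :: nat
    and xstar ystar :: "'a \<Rightarrow>\<^sub>L real"
  assumes basis: "schauder_basis N e"
    and biorth: "\<forall>j k. 1 \<le> j \<and> enat j \<le> N \<and> 1 \<le> k \<and> enat k \<le> N \<longrightarrow>
                   blinfun_apply (estar j) (e k) = (if j = k then 1 else 0)"
    and n_pos: "1 \<le> n"
    and m1: "1 \<le> m 1"
    and m_mono: "\<forall>j\<in>{1..<n}. m j < m (Suc j)"
    and mn: "enat (m n) < N"
    and hyp: "\<forall>x\<in>span (e ` {1..m 1}).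
               skipped_unconditional lam (\<lambda>i. if i = 1 then x else e (m 1 + i - 1))
                 (N - enat (m 1) + 1)"
    and xstar_nz: "xstar \<noteq> 0"
    and ystar_nz: "ystar \<noteq> 0"
    and xstar_span: "xstar \<in> span (estar ` {1..m 1})"
    and ystar_van: "\<forall>j\<in>{1..m n}. blinfun_apply ystar (e j) = 0"
  shows "dual_skipped_unconditional_basis lam
           ([xstar] @ map (\<lambda>j. estar (m j)) [2..<n] @ [ystar])"
proof -
  interpret skipped_dual_setting e estar N lam m n xstar ystar
    by (rule skipped_dual_setting.intro[OF assms])
  show ?thesis using fs_dual_skipped_unconditional unfolding fs_def .
qed

end
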